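(* Let $\varphi(z)=Az+b$ be such that $C_\varphi$ is bounded on $\mathcal F(\mathbb C^d)$. Then $b\in\mathrm{Ran}(I-A)$; in particular $\varphi$ has a fixed point in $\mathbb C^d$.
   Context: $\mathcal F(\mathbb C^d)$ is the Fock space of entire functions $f$ on $\mathbb C^d$ with $\|f\|^2=(2\pi)^{-d}\int_{\mathbb C^d}|f(z)|^2e^{-|z|^2/2}\,dA(z)<\infty$ ($dA$ Lebesgue measure). $C_\varphi f=f\circ\varphi$. It is known that $C_\varphi$ is bounded iff $\varphi(z)=Az+b$ with $\|A\|\le1$ and $\langle Av,b\rangle=0$ whenever $|Av|=|v|$, where $\langle z,w\rangle=\sum_j z_j\overline{w_j}$. *)

theory Defs
  imports "HOL-Analysis.Analysis"
begin

text \<open>Points of C^d are vectors complex ^ 'd (d = CARD('d)); the norm is the Euclidean one,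
  so norm z ^ 2 = sum of |z_j|^2.  Lebesgue measure dA on C^d = R^(2d) is lborel.\<close>

definition entire_fun :: "(complex ^ 'd \<Rightarrow> complex) \<Rightarrow> bool" where
  "entire_fun f \<longleftrightarrow>
     (\<forall>z. \<exists>D :: complex ^ 'd. (f has_derivative (\<lambda>h. \<Sum>i\<in>UNIV. D $ i * h $ i)) (at z))"

definition fock_norm2 :: "(complex ^ 'd \<Rightarrow> complex) \<Rightarrow> ennreal" where
  "fock_norm2 f = ennreal ((2 * pi) powi (- int CARD('d))) *
     (\<integral>\<^sup>+ z. ennreal ((cmod (f z))\<^sup>2 * exp (- (norm z)\<^sup>2 / 2)) \<partial>lborel)"

definition fock_space :: "(complex ^ 'd \<Rightarrow> complex) set" where
  "fock_space = {f. entire_fun f \<and> fock_norm2 f < \<infinity>}"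

definition bounded_comp_op :: "(complex ^ 'd \<Rightarrow> complex ^ 'd) \<Rightarrow> bool" where
  "bounded_comp_op \<phi> \<longleftrightarrow>
     (\<forall>f\<in>fock_space. f \<circ> \<phi> \<in> fock_space) \<and>
     (\<exists>C::real. C \<ge> 0 \<and> (\<forall>f\<in>fock_space. fock_norm2 (f \<circ> \<phi>) \<le> ennreal C * fock_norm2 f))"

end

theory Submission
  imports Defs "HOL-Probability.Distributions"
begin

text \<open>If \<open>b \<notin> Ran(I - A)\<close>, some complex linear functional \<open>\<ell>\<close> vanishes on \<open>Ran(I - A)\<close>
  but not at \<open>b\<close>. Then \<open>\<ell> \<circ> A = \<ell>\<close>, so \<open>f\<^sub>s = exp (s \<ell>)\<close> satisfies
  \<open>f\<^sub>s \<circ> \<phi> = exp (s \<ell>(b)) f\<^sub>s\<close>. Each \<open>f\<^sub>s\<close> is a nonvanishing element of the Fock space (its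
  weighted square is dominated by a Gaussian), so the norm of \<open>C\<^sub>\<phi>\<close> is at least
  \<open>|exp (s \<ell>(b))|\<close> for every complex \<open>s\<close>, which is unbounded.\<close>

definition lin_form :: "complex ^ 'd \<Rightarrow> complex ^ 'd \<Rightarrow> complex" where
  "lin_form c z = (\<Sum>j\<in>UNIV. c $ j * z $ j)"

lemma lin_form_add: "lin_form c (x + y) = lin_form c x + lin_form c y"
  by (simp add: lin_form_def sum.distrib distrib_left)

lemma lin_form_diff: "lin_form c (x - y) = lin_form c x - lin_form c y"
  by (simp add: lin_form_def sum_subtractf right_diff_distrib)

lemma lin_form_scale_left: "lin_form (s *s c) z = s * lin_form c z"
  by (simp add: lin_form_def sum_distrib_left mult.assoc)

lemma lin_form_scale_right: "lin_form c (s *s z) = s * lin_form c z"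
  by (simp add: lin_form_def sum_distrib_left ac_simps)

lemma bounded_linear_lin_form: "bounded_linear (lin_form c)"
  unfolding lin_form_def
  by (intro bounded_linear_sum bounded_linear_mult_right[THEN bounded_linear_compose]
      bounded_linear_vec_nth)

lemma exists_lin_form_vanishing_on_range:
  fixes B :: "complex ^ 'd ^ 'd"
  assumes "b \<notin> range ((*v) B)"
  shows "\<exists>c. (\<forall>x. lin_form c (B *v x) = 0) \<and> lin_form c b \<noteq> 0"
proof -
  have span_range: "span (range ((*v) B)) = range ((*v) B)"
    by (simp add: linear_subspace_image)
  obtain y z where y: "y \<in> span (range ((*v) B))"
    and z: "\<And>w. w \<in> span (range ((*v) B)) \<Longrightarrow> orthogonal z w" and b: "b = y + z"
    using orthogonal_subspace_decomp_exists by blast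
  define c where "c = (\<chi> j. cnj (z $ j))"
  have Re_lin_form: "Re (lin_form c x) = x \<bullet> z" for x
    by (simp add: lin_form_def c_def inner_vec_def inner_complex_def mult.commute)
  have orth: "Re (lin_form c (B *v x)) = 0" for x
    using z[of "B *v x"] by (simp add: Re_lin_form span_base orthogonal_def inner_commute)
  have "lin_form c (B *v x) = 0" for x
  proof -
    \<comment> \<open>\<open>z\<close> is only real-orthogonal to the range, but the range is closed under \<open>\<i> *s _\<close>\<close>
    have "Im (lin_form c (B *v x)) = - Re (lin_form c (B *v (\<i> *s x)))"
      by (simp add: vec.scale lin_form_scale_right)
    then show ?thesis using orth[of x] orth[of "\<i> *s x"] by (simp add: complex_eq_iff)
  qed
  moreover have "lin_form c b \<noteq> 0"
  proof
    assume "lin_form c b = 0"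
    moreover have "y \<bullet> z = 0" using z[OF y] by (simp add: orthogonal_def inner_commute)
    ultimately have "z = 0" using Re_lin_form[of b] by (simp add: b inner_add_left)
    then show False using assms y span_range b by auto
  qed
  ultimately show ?thesis by blast
qed

lemma nn_integral_exp_neg_sq_finite:
  assumes "a > 0"
  shows "(\<integral>\<^sup>+ x. ennreal (exp (- a * x\<^sup>2)) \<partial>lborel) < \<infinity>"
proof -
  have "exp (- a * x\<^sup>2) = sqrt (pi / a) * normal_density 0 (sqrt (1 / (2 * a))) x" for x :: real
    using assms by (simp add: normal_density_def real_sqrt_divide field_simps)
  moreover have "integrable lborel (\<lambda>x. sqrt (pi / a) * normal_density 0 (sqrt (1 / (2 * a))) x)"
    using assms by (intro integrable_mult_right integrable_normal_density) simp
  ultimately have "integrable lborel (\<lambda>x::real. exp (- a * x\<^sup>2))" by simp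
  then show ?thesis using integrableD(2) by (simp add: top.not_eq_extremum)
qed

lemma nn_integral_exp_neg_norm_sq_finite:
  assumes "a > 0"
  shows "(\<integral>\<^sup>+ z. ennreal (exp (- a * (norm (z::'a::euclidean_space))\<^sup>2)) \<partial>lborel) < \<infinity>"
proof -
  have "(norm z)\<^sup>2 = (\<Sum>b\<in>Basis. (z \<bullet> b)\<^sup>2)" for z :: 'a
    by (subst power2_norm_eq_inner, subst euclidean_inner) (simp add: power2_eq_square)
  then have "ennreal (exp (- a * (norm z)\<^sup>2)) = (\<Prod>b\<in>Basis. ennreal (exp (- a * (z \<bullet> b)\<^sup>2)))"
    for z :: 'a
    by (simp add: sum_distrib_left exp_sum[symmetric] prod_ennreal sum_negf)
  then have "(\<integral>\<^sup>+ z. ennreal (exp (- a * (norm (z::'a))\<^sup>2)) \<partial>lborel)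
      = (\<Prod>b\<in>(Basis::'a set). \<integral>\<^sup>+ x. ennreal (exp (- a * x\<^sup>2)) \<partial>lborel)"
    using nn_integral_lborel_prod[of "\<lambda>b x. ennreal (exp (- a * x\<^sup>2))"] by simp
  also have "\<dots> < \<infinity>"
    using nn_integral_exp_neg_sq_finite[OF assms] by (simp add: power_less_top_ennreal)
  finally show ?thesis .
qed

lemma norm_lin_form_le: "cmod (lin_form c z) \<le> norm c * norm z"
proof -
  have "cmod (lin_form c z) \<le> (\<Sum>j\<in>UNIV. cmod (c $ j) * cmod (z $ j))"
    unfolding lin_form_def by (rule sum_norm_le) (simp add: norm_mult)
  also have "\<dots> \<le> norm c * norm z"
    using L2_set_mult_ineq[of "\<lambda>j. cmod (c $ j)" "\<lambda>j. cmod (z $ j)" UNIV]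
    by (simp add: norm_vec_def)
  finally show ?thesis .
qed

lemma entire_fun_continuous:
  assumes "entire_fun f"
  shows "continuous_on UNIV f"
proof -
  have "isCont f z" for z
    using assms has_derivative_continuous unfolding entire_fun_def by blast
  then show ?thesis by (simp add: continuous_at_imp_continuous_on)
qed

lemma entire_fun_exp_lin_form: "entire_fun (\<lambda>z. exp (lin_form c z))"
  unfolding entire_fun_def
proof
  fix z
  have deriv:
    "((\<lambda>z. exp (lin_form c z)) has_derivative (\<lambda>h. exp (lin_form c z) * lin_form c h)) (at z)"
    using has_derivative_compose[OF bounded_linear_imp_has_derivative[OF bounded_linear_lin_form]
        DERIV_exp[THEN has_field_derivative_imp_has_derivative]]
    by (simp add: o_def mult.commute)
  have derivative_eq: "(\<lambda>h. exp (lin_form c z) * lin_form c h)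
      = (\<lambda>h. \<Sum>i\<in>UNIV. (exp (lin_form c z) *s c) $ i * h $ i)"
    by (simp add: lin_form_def sum_distrib_left mult.assoc)
  show "\<exists>D. ((\<lambda>z. exp (lin_form c z)) has_derivative (\<lambda>h. \<Sum>i\<in>UNIV. D $ i * h $ i)) (at z)"
    using deriv unfolding derivative_eq by blast
qed

lemma exp_lin_form_gaussian_bound:
  "(cmod (exp (lin_form c z)))\<^sup>2 * exp (- (norm z)\<^sup>2 / 2)
    \<le> exp (4 * (norm c)\<^sup>2) * exp (- (norm z)\<^sup>2 / 4)"
proof -
  have "Re (lin_form c z) \<le> norm c * norm z"
    using complex_Re_le_cmod[of "lin_form c z"] norm_lin_form_le[of c z] by linarith
  moreover have "2 * (norm c * norm z) \<le> 4 * (norm c)\<^sup>2 + (norm z)\<^sup>2 / 4"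
    using zero_le_power2[of "2 * norm c - norm z / 2"] by (simp add: power2_eq_square algebra_simps)
  ultimately have "2 * Re (lin_form c z) - (norm z)\<^sup>2 / 2 \<le> 4 * (norm c)\<^sup>2 - (norm z)\<^sup>2 / 4"
    by linarith
  then show ?thesis
    by (simp add: norm_exp_eq_Re power2_eq_square flip: exp_add)
qed

lemma borel_measurable_fock_density:
  assumes "continuous_on UNIV f"
  shows "(\<lambda>z. ennreal ((cmod (f z))\<^sup>2 * exp (- (norm z)\<^sup>2 / 2))) \<in> borel_measurable lborel"
proof -
  have "continuous_on UNIV (\<lambda>z. (cmod (f z))\<^sup>2 * exp (- (norm z)\<^sup>2 / 2))"
    by (intro continuous_intros assms) auto
  then have "(\<lambda>z. (cmod (f z))\<^sup>2 * exp (- (norm z)\<^sup>2 / 2)) \<in> borel_measurable borel"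
    by (rule borel_measurable_continuous_onI)
  then show ?thesis by measurable
qed

lemma fock_norm2_exp_lin_form_finite:
  fixes c :: "complex ^ 'd"
  shows "fock_norm2 (\<lambda>z. exp (lin_form c z)) < \<infinity>"
proof -
  let ?K = "exp (4 * (norm c)\<^sup>2)"
  have "(\<integral>\<^sup>+ z. ennreal ((cmod (exp (lin_form c z)))\<^sup>2 * exp (- (norm z)\<^sup>2 / 2)) \<partial>lborel)
      \<le> (\<integral>\<^sup>+ z. ennreal ?K * ennreal (exp (- (1/4) * (norm (z :: complex ^ 'd))\<^sup>2)) \<partial>lborel)"
  proof (rule nn_integral_mono)
    fix z :: "complex ^ 'd"
    have "(cmod (exp (lin_form c z)))\<^sup>2 * exp (- (norm z)\<^sup>2 / 2)
        \<le> ?K * exp (- (1/4) * (norm z)\<^sup>2)"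
      using exp_lin_form_gaussian_bound[of c z] by simp
    then show "ennreal ((cmod (exp (lin_form c z)))\<^sup>2 * exp (- (norm z)\<^sup>2 / 2))
        \<le> ennreal ?K * ennreal (exp (- (1/4) * (norm z)\<^sup>2))"
      by (simp add: ennreal_leI flip: ennreal_mult)
  qed
  also have "\<dots>
      = ennreal ?K * (\<integral>\<^sup>+ z. ennreal (exp (- (1/4) * (norm (z :: complex ^ 'd))\<^sup>2)) \<partial>lborel)"
    by (rule nn_integral_cmult) measurable
  also have "\<dots> < \<infinity>"
    using nn_integral_exp_neg_norm_sq_finite[of "1/4", where 'a="complex ^ 'd"]
    by (simp add: ennreal_mult_less_top)
  finally show ?thesis
    unfolding fock_norm2_def by (simp add: ennreal_mult_less_top)
qed

lemma exp_lin_form_in_fock_space: "(\<lambda>z. exp (lin_form c z)) \<in> fock_space"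
  using entire_fun_exp_lin_form fock_norm2_exp_lin_form_finite unfolding fock_space_def by blast

lemma fock_norm2_cmult:
  fixes f :: "complex ^ 'd \<Rightarrow> complex"
  assumes "continuous_on UNIV f"
  shows "fock_norm2 (\<lambda>z. k * f z) = ennreal ((cmod k)\<^sup>2) * fock_norm2 f"
proof -
  have "(\<integral>\<^sup>+ z. ennreal ((cmod (k * f z))\<^sup>2 * exp (- (norm z)\<^sup>2 / 2)) \<partial>lborel)
      = (\<integral>\<^sup>+ z. ennreal ((cmod k)\<^sup>2) * ennreal ((cmod (f z))\<^sup>2 * exp (- (norm z)\<^sup>2 / 2))
          \<partial>lborel)"
    by (intro nn_integral_cong)
      (simp add: norm_mult power_mult_distrib ennreal_mult[symmetric] mult.assoc)
  also have "\<dots> = ennreal ((cmod k)\<^sup>2)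
      * (\<integral>\<^sup>+ z. ennreal ((cmod (f z))\<^sup>2 * exp (- (norm z)\<^sup>2 / 2)) \<partial>lborel)"
    by (rule nn_integral_cmult[OF borel_measurable_fock_density[OF assms]])
  finally show ?thesis
    unfolding fock_norm2_def by (simp add: ac_simps)
qed

lemma fock_norm2_nonvanishing_pos:
  fixes f :: "complex ^ 'd \<Rightarrow> complex"
  assumes "continuous_on UNIV f" and "\<And>z. f z \<noteq> 0"
  shows "fock_norm2 f \<noteq> 0"
proof
  assume "fock_norm2 f = 0"
  then have "(\<integral>\<^sup>+ z. ennreal ((cmod (f z))\<^sup>2 * exp (- (norm z)\<^sup>2 / 2)) \<partial>lborel) = 0"
    unfolding fock_norm2_def by simp
  then have "AE z in lborel. ennreal ((cmod (f z))\<^sup>2 * exp (- (norm z)\<^sup>2 / 2)) = 0"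
    using nn_integral_0_iff_AE[OF borel_measurable_fock_density[OF assms(1)]] by simp
  then have "AE z in (lborel :: (complex ^ 'd) measure). False"
    using assms(2) by simp
  then show False
    by (simp add: ae_filter_eq_bot_iff trivial_limit_def[symmetric])
qed

lemma bounded_comp_op_eigenvalues_bounded:
  assumes "bounded_comp_op \<phi>"
  obtains C where "\<And>f k. f \<in> fock_space \<Longrightarrow> (\<And>z. f z \<noteq> 0) \<Longrightarrow> f \<circ> \<phi> = (\<lambda>z. k * f z)
    \<Longrightarrow> (cmod k)\<^sup>2 \<le> C"
proof -
  obtain C :: real where "C \<ge> 0"
    and C: "\<And>f. f \<in> fock_space \<Longrightarrow> fock_norm2 (f \<circ> \<phi>) \<le> ennreal C * fock_norm2 f"
    using assms unfolding bounded_comp_op_def by blast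
  have "(cmod k)\<^sup>2 \<le> C"
    if f: "f \<in> fock_space" and nz: "\<And>z. f z \<noteq> 0" and eigen: "f \<circ> \<phi> = (\<lambda>z. k * f z)" for f k
  proof -
    have cont: "continuous_on UNIV f"
      using f entire_fun_continuous by (auto simp: fock_space_def)
    obtain N where N: "fock_norm2 f = ennreal N" "N \<ge> 0"
      using f by (cases "fock_norm2 f") (auto simp: fock_space_def)
    have "N > 0"
      using fock_norm2_nonvanishing_pos[OF cont nz] N by auto
    have "ennreal ((cmod k)\<^sup>2 * N) \<le> ennreal (C * N)"
      using C[OF f] N \<open>C \<ge> 0\<close>
      by (simp add: eigen fock_norm2_cmult[OF cont] ennreal_mult[symmetric])
    then have "(cmod k)\<^sup>2 * N \<le> C * N"
      using N \<open>C \<ge> 0\<close> by (simp add: ennreal_le_iff)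
    then show ?thesis using \<open>N > 0\<close> by simp
  qed
  then show thesis by (rule that)
qed

lemma bounded_comp_op_affine_translation_in_range:
  fixes A :: "complex ^ 'd ^ 'd"
  assumes "bounded_comp_op (\<lambda>z. A *v z + b)"
  shows "b \<in> range (\<lambda>x. x - A *v x)"
proof (rule ccontr)
  assume "b \<notin> range (\<lambda>x. x - A *v x)"
  then have "b \<notin> range ((*v) (mat 1 - A))"
    by (simp add: matrix_vector_mult_diff_rdistrib)
  then obtain c where "\<And>x. lin_form c ((mat 1 - A) *v x) = 0" and cb: "lin_form c b \<noteq> 0"
    using exists_lin_form_vanishing_on_range by blast
  then have invariant: "lin_form c (A *v x) = lin_form c x" for x
    by (simp add: matrix_vector_mult_diff_rdistrib lin_form_diff)
  obtain C where C: "\<And>f k. f \<in> fock_space \<Longrightarrow> (\<And>z. f z \<noteq> 0)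
      \<Longrightarrow> f \<circ> (\<lambda>z. A *v z + b) = (\<lambda>z. k * f z) \<Longrightarrow> (cmod k)\<^sup>2 \<le> C"
    using bounded_comp_op_eigenvalues_bounded[OF assms] by blast
  define s where "s = complex_of_real (C / 2) / lin_form c b"
  let ?f = "\<lambda>z. exp (lin_form (s *s c) z)"
  have "?f \<circ> (\<lambda>z. A *v z + b) = (\<lambda>z. exp (s * lin_form c b) * ?f z)"
    by (auto simp: lin_form_scale_left lin_form_add invariant distrib_left exp_add mult.commute)
  then have "(cmod (exp (s * lin_form c b)))\<^sup>2 \<le> C"
    by (intro C[OF exp_lin_form_in_fock_space]) auto
  moreover have "(cmod (exp (s * lin_form c b)))\<^sup>2 = exp C"
    using cb by (simp add: s_def power2_eq_square flip: exp_add)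
  moreover have "1 + C \<le> exp C"
    by (rule exp_ge_add_one_self)
  ultimately show False by linarith
qed

theorem mainTheorem3:
  fixes A :: "complex ^ 'd ^ 'd" and b :: "complex ^ 'd"
  assumes "bounded_comp_op (\<lambda>z. A *v z + b)"
  shows "b \<in> range (\<lambda>x. x - A *v x) \<and> (\<exists>z. A *v z + b = z)"
proof -
  obtain x where x: "b = x - A *v x"
    using bounded_comp_op_affine_translation_in_range[OF assms] by blast
  then have "A *v x + b = x"
    by simp
  with x show ?thesis
    by blast
qed

end
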